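(* Let $n \ge 4$ be an even integer, let $m = \frac{n-2}{2}$, and let $G_n$ be the $n$-vertex graph obtained from two disjoint cliques $Q_1, Q_2$, each isomorphic to $K_m$, together with two non-adjacent vertices $u$ and $v$, each adjacent to every vertex of $Q_1 \cup Q_2$ (i.e., $G_n$ is the join of $2K_m$ with $2K_1$). Then $AT(G_n) = \frac{n}{2}$.
   Context: For a digraph $D$, an Eulerian subdigraph is a spanning subdigraph $F$ with $d^+_F(v) = d^-_F(v)$ for every vertex $v$; it is even or odd according to the parity of its number of edges. The Alon--Tarsi number $AT(G)$ is the minimum $k$ such that there is an orientation $D$ of $G$ in which every vertex has outdegree less than $k$ and the number of even Eulerian subdigraphs of $D$ differs from the number of odd Eulerian subdigraphs. *)

theory Defs
  imports Main
begin

text \<open>A simple graph is given by a vertex set V and a set E of 2-element edges {x,y}.\<close>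

definition is_orientation :: "'a set set \<Rightarrow> ('a \<times> 'a) set \<Rightarrow> bool" where
  "is_orientation E D \<longleftrightarrow>
     (\<forall>(x,y)\<in>D. x \<noteq> y \<and> {x,y} \<in> E) \<and>
     (\<forall>e\<in>E. \<exists>!p. p \<in> D \<and> e = {fst p, snd p})"

definition outdeg :: "('a \<times> 'a) set \<Rightarrow> 'a \<Rightarrow> nat" where
  "outdeg D x = card {y. (x,y) \<in> D}"

definition indeg :: "('a \<times> 'a) set \<Rightarrow> 'a \<Rightarrow> nat" where
  "indeg D x = card {y. (y,x) \<in> D}"

definition eulerian_sub :: "('a \<times> 'a) set \<Rightarrow> ('a \<times> 'a) set \<Rightarrow> bool" where
  "eulerian_sub D F \<longleftrightarrow> F \<subseteq> D \<and> (\<forall>x. outdeg F x = indeg F x)"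

definition EE :: "('a \<times> 'a) set \<Rightarrow> nat" where
  "EE D = card {F. eulerian_sub D F \<and> even (card F)}"

definition EO :: "('a \<times> 'a) set \<Rightarrow> nat" where
  "EO D = card {F. eulerian_sub D F \<and> odd (card F)}"

definition AT :: "'a set \<Rightarrow> 'a set set \<Rightarrow> nat" where
  "AT V E = (LEAST k. \<exists>D. is_orientation E D \<and> (\<forall>x\<in>V. outdeg D x < k) \<and> EE D \<noteq> EO D)"

text \<open>The graph G_n on vertices {0..<n}, with m = (n-2)/2:
Q1 = {0..<m}, Q2 = {m..<2m} cliques, u = 2m, v = 2m+1 non-adjacent,
each adjacent to all of Q1 \<union> Q2.\<close>

definition Gn_vertices :: "nat \<Rightarrow> nat set" where
  "Gn_vertices n = {0..<n}"

definition Gn_edges :: "nat \<Rightarrow> nat set set" where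
  "Gn_edges n = (let m = (n - 2) div 2 in
     {{x,y} | x y. x \<noteq> y \<and>
        ((x < m \<and> y < m) \<or>
         (m \<le> x \<and> x < 2*m \<and> m \<le> y \<and> y < 2*m) \<or>
         (x < 2*m \<and> (y = 2*m \<or> y = 2*m+1)))})"

end

theory Submission
  imports Defs "HOL-Library.FuncSet" "HOL-Computational_Algebra.Polynomial"
begin

text \<open>Write \<open>u = 2*m\<close>, \<open>v = 2*m+1\<close>, \<open>Q\<^sub>1 = {..<m}\<close>, \<open>Q\<^sub>2 = {m..<2*m}\<close>.

  Lower bound: \<open>Q\<^sub>1 \<union> {u}\<close> is a clique on \<open>m + 1\<close> vertices, so \<open>G\<^sub>n\<close> has no proper
  \<open>m\<close>-colouring. By the Alon--Tarsi theorem, which follows from the Combinatorial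
  Nullstellensatz in its Lagrange-interpolation form, every orientation with all outdegrees
  below \<open>m\<close> therefore has as many even as odd Eulerian subdigraphs.

  Upper bound: orient both cliques transitively, with \<open>u \<rightarrow> Q\<^sub>1 \<rightarrow> v\<close> and
  \<open>v \<rightarrow> Q\<^sub>2 \<rightarrow> u\<close>; all outdegrees are at most \<open>m\<close>. An Eulerian subdigraph is a pair of
  subgraphs of the two halves, each balanced inside its clique and carrying the same flow \<open>k\<close>
  from \<open>u\<close> to \<open>v\<close> resp. from \<open>v\<close> to \<open>u\<close>. The symmetry \<open>Q\<^sub>1 \<leftrightarrow> Q\<^sub>2\<close>,
  \<open>u \<leftrightarrow> v\<close> gives both halves the same signed count \<open>s\<^sub>k\<close>, so
  \<open>EE - EO = \<Sum>\<^sub>k s\<^sub>k\<^sup>2 \<ge> s\<^sub>0\<^sup>2 = 1\<close>, as only the empty subgraph carries no flow.\<close>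

section \<open>Degrees of arc sets\<close>

lemma finite_out_neighbours: "finite F \<Longrightarrow> finite {y. (x, y) \<in> F}"
  by (rule finite_subset[of _ "snd ` F"]) force+

lemma finite_in_neighbours: "finite F \<Longrightarrow> finite {y. (y, x) \<in> F}"
  by (rule finite_subset[of _ "fst ` F"]) force+

lemma outdeg_eq_0: "(\<And>y. (x, y) \<notin> F) \<Longrightarrow> outdeg F x = 0"
  by (simp add: outdeg_def)

lemma indeg_eq_0: "(\<And>y. (y, x) \<notin> F) \<Longrightarrow> indeg F x = 0"
  by (simp add: indeg_def)

lemma outdeg_empty [simp]: "outdeg {} x = 0"
  by (simp add: outdeg_def)

lemma indeg_empty [simp]: "indeg {} x = 0"
  by (simp add: indeg_def)

lemma outdeg_insert:
  assumes "finite F" "p \<notin> F"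
  shows "outdeg (insert p F) x = outdeg F x + (if x = fst p then 1 else 0)"
proof -
  have "{y. (x, y) \<in> insert p F} = (if x = fst p then insert (snd p) else id) {y. (x, y) \<in> F}"
    by (cases p) auto
  then show ?thesis
    using assms finite_out_neighbours[OF assms(1)] by (cases p) (auto simp: outdeg_def)
qed

lemma indeg_insert:
  assumes "finite F" "p \<notin> F"
  shows "indeg (insert p F) x = indeg F x + (if x = snd p then 1 else 0)"
proof -
  have "{y. (y, x) \<in> insert p F} = (if x = snd p then insert (fst p) else id) {y. (y, x) \<in> F}"
    by (cases p) auto
  then show ?thesis
    using assms finite_in_neighbours[OF assms(1)] by (cases p) (auto simp: indeg_def)
qed

lemma outdeg_Un_disjoint:
  assumes "finite A" "finite B" "A \<inter> B = {}"
  shows "outdeg (A \<union> B) x = outdeg A x + outdeg B x"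
proof -
  have "{y. (x, y) \<in> A \<union> B} = {y. (x, y) \<in> A} \<union> {y. (x, y) \<in> B}" by auto
  then show ?thesis
    using assms finite_out_neighbours[of A x] finite_out_neighbours[of B x]
    by (simp add: outdeg_def card_Un_disjoint disjoint_iff)
qed

lemma indeg_Un_disjoint:
  assumes "finite A" "finite B" "A \<inter> B = {}"
  shows "indeg (A \<union> B) x = indeg A x + indeg B x"
proof -
  have "{y. (y, x) \<in> A \<union> B} = {y. (y, x) \<in> A} \<union> {y. (y, x) \<in> B}" by auto
  then show ?thesis
    using assms finite_in_neighbours[of A x] finite_in_neighbours[of B x]
    by (simp add: indeg_def card_Un_disjoint disjoint_iff)
qed

lemma sum_outdeg: "finite F \<Longrightarrow> finite V \<Longrightarrow> F \<subseteq> V \<times> V \<Longrightarrow> (\<Sum>x\<in>V. outdeg F x) = card F"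
  by (induction F rule: finite_induct) (simp_all add: outdeg_insert sum.distrib mem_Times_iff)

lemma sum_indeg: "finite F \<Longrightarrow> finite V \<Longrightarrow> F \<subseteq> V \<times> V \<Longrightarrow> (\<Sum>x\<in>V. indeg F x) = card F"
  by (induction F rule: finite_induct) (simp_all add: indeg_insert sum.distrib mem_Times_iff)

lemma prod_fst_arcs:
  "finite F \<Longrightarrow> finite V \<Longrightarrow> F \<subseteq> V \<times> V \<Longrightarrow>
    (\<Prod>p\<in>F. f (fst p)) = (\<Prod>x\<in>V. (f x :: 'a::comm_monoid_mult) ^ outdeg F x)"
  by (induction F rule: finite_induct)
    (simp_all add: outdeg_insert power_add prod.distrib if_distrib[of "power _"] mult.commute
      mem_Times_iff cong: if_cong)

lemma prod_snd_arcs: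
  "finite F \<Longrightarrow> finite V \<Longrightarrow> F \<subseteq> V \<times> V \<Longrightarrow>
    (\<Prod>p\<in>F. f (snd p)) = (\<Prod>x\<in>V. (f x :: 'a::comm_monoid_mult) ^ indeg F x)"
  by (induction F rule: finite_induct)
    (simp_all add: indeg_insert power_add prod.distrib if_distrib[of "power _"] mult.commute
      mem_Times_iff cong: if_cong)

lemma degrees_outside:
  assumes "F \<subseteq> V \<times> V" "x \<notin> V"
  shows "outdeg F x = 0" "indeg F x = 0"
  using assms by (auto intro!: outdeg_eq_0 indeg_eq_0)

lemma eulerian_sub_iff_balanced_on:
  assumes "F \<subseteq> D" "D \<subseteq> V \<times> V"
  shows "eulerian_sub D F \<longleftrightarrow> (\<forall>x\<in>V. outdeg F x = indeg F x)"
  using assms degrees_outside[of F V] unfolding eulerian_sub_def by (metis subset_trans)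

lemma finite_eulerian_subs: "finite D \<Longrightarrow> finite {F. eulerian_sub D F}"
  by (rule finite_subset[of _ "Pow D"]) (auto simp: eulerian_sub_def)

lemma EE_minus_EO:
  assumes "finite D"
  shows "of_nat (EE D) - of_nat (EO D) = (\<Sum>F | eulerian_sub D F. (-1 :: 'a::ring_1) ^ card F)"
proof -
  have "(\<Sum>F | eulerian_sub D F. (-1 :: 'a) ^ card F) =
      (\<Sum>F | eulerian_sub D F \<and> even (card F). (-1) ^ card F) +
      (\<Sum>F | eulerian_sub D F \<and> odd (card F). (-1) ^ card F)"
    using finite_eulerian_subs[OF assms]
    by (subst sum.union_disjoint[symmetric]) (auto intro!: sum.cong)
  then show ?thesis by (simp add: EE_def EO_def)
qed

section \<open>The Alon--Tarsi theorem\<close>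

definition lagrange_denom :: "'a::field set \<Rightarrow> 'a \<Rightarrow> 'a" where
  "lagrange_denom S s = (\<Prod>t\<in>S - {s}. s - t)"

lemma lagrange_denom_nonzero: "finite S \<Longrightarrow> lagrange_denom S s \<noteq> 0"
  by (auto simp: lagrange_denom_def)

text \<open>Lagrange interpolation of \<open>X ^ e\<close> on the nodes \<open>S\<close>; the sum is the coefficient
  of \<open>X ^ (card S - 1)\<close> in the interpolating polynomial.\<close>
lemma sum_power_div_lagrange_denom:
  fixes S :: "'a::field set"
  assumes S: "finite S" and e: "e < card S"
  shows "(\<Sum>s\<in>S. s ^ e / lagrange_denom S s) = (if e = card S - 1 then 1 else 0)"
proof -
  define L where "L s = (\<Prod>t\<in>S - {s}. [:-t, 1:])" for s
  define p where "p = (\<Sum>s\<in>S. smult (s ^ e / lagrange_denom S s) (L s))"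
  have degree_L: "degree (L s) = card S - 1" if "s \<in> S" for s
    unfolding L_def using S that by (subst degree_prod_eq_sum_degree) auto
  have poly_L: "poly (L s) r = (\<Prod>t\<in>S - {s}. r - t)" for s r
    unfolding L_def poly_prod by simp
  have "poly p r = r ^ e" if "r \<in> S" for r
  proof -
    have "poly (L s) r = 0" if "s \<in> S - {r}" for s
      unfolding poly_L using S \<open>r \<in> S\<close> that by (intro prod_zero) auto
    then have "poly p r = r ^ e / lagrange_denom S r * poly (L r) r"
      unfolding p_def poly_sum using S that by (simp add: sum.remove)
    then show ?thesis
      using lagrange_denom_nonzero[OF S, of r] by (simp add: poly_L lagrange_denom_def)
  qed
  moreover have "degree p \<le> card S - 1"
    unfolding p_def
    by (intro degree_sum_le) (auto simp: S degree_L intro: order.trans[OF degree_smult_le])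
  ultimately have "p = monom 1 e"
    using e by (intro poly_eqI_degree[of S]) (auto simp: poly_monom degree_monom_eq)
  moreover have "coeff p (card S - 1) = (\<Sum>s\<in>S. s ^ e / lagrange_denom S s)"
  proof -
    have "coeff (L s) (card S - 1) = 1" if "s \<in> S" for s
      using degree_L[OF that] lead_coeff_prod[of "\<lambda>t. [:-t, 1:]" "S - {s}"]
      by (simp only: L_def) simp
    then show ?thesis unfolding p_def coeff_sum by simp
  qed
  ultimately show ?thesis by simp
qed

text \<open>Exponents summing to \<open>card V * (card S - 1)\<close> are either all equal to \<open>card S - 1\<close>,
  or one of them is smaller and its factor vanishes.\<close>
lemma prod_sum_power_div_lagrange_denom:
  fixes S :: "'a::field set"
  assumes S: "finite S" "S \<noteq> {}" and V: "finite V"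
    and total: "(\<Sum>x\<in>V. e x) = card V * (card S - 1)"
  shows "(\<Prod>x\<in>V. \<Sum>s\<in>S. s ^ e x / lagrange_denom S s) = (if \<forall>x\<in>V. e x = card S - 1 then 1 else 0)"
proof (cases "\<forall>x\<in>V. e x = card S - 1")
  case True
  with S show ?thesis by (simp add: sum_power_div_lagrange_denom card_gt_0_iff)
next
  case False
  have "\<exists>y\<in>V. e y < card S - 1"
  proof (rule ccontr)
    assume "\<not> ?thesis"
    then have "(\<Sum>x\<in>V. card S - 1) < (\<Sum>x\<in>V. e x)"
      using False V by (intro sum_strict_mono_ex1) (auto simp: not_less order.order_iff_strict)
    with total show False by simp
  qed
  then obtain y where "y \<in> V" "e y < card S - 1" by blast
  with S V False show ?thesis
    by (auto simp: sum_power_div_lagrange_denom intro!: prod_zero bexI[of _ y])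
qed

lemma prod_arc_differences:
  fixes c :: "'v \<Rightarrow> 'a::comm_ring_1"
  assumes V: "finite V" and DV: "D \<subseteq> V \<times> V"
  shows "(\<Prod>p\<in>D. c (fst p) - c (snd p)) =
    (\<Sum>B\<in>Pow D. (-1) ^ card (D - B) * (\<Prod>x\<in>V. c x ^ (outdeg B x + indeg (D - B) x)))"
proof -
  have D: "finite D" using finite_subset[OF DV] V by blast
  have "(\<Prod>p\<in>D. c (fst p) - c (snd p)) = (\<Sum>B\<in>Pow D. (\<Prod>p\<in>B. c (fst p)) * (\<Prod>p\<in>D - B. - c (snd p)))"
    using prod_add[OF D, of "\<lambda>p. c (fst p)" "\<lambda>p. - c (snd p)"] by simp
  also have "\<dots> = (\<Sum>B\<in>Pow D. (-1) ^ card (D - B) * (\<Prod>x\<in>V. c x ^ (outdeg B x + indeg (D - B) x)))"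
  proof (rule sum.cong)
    fix B assume "B \<in> Pow D"
    then have "finite B" "B \<subseteq> V \<times> V" "finite (D - B)" "D - B \<subseteq> V \<times> V"
      using D DV by (auto intro: finite_subset)
    then show "(\<Prod>p\<in>B. c (fst p)) * (\<Prod>p\<in>D - B. - c (snd p)) =
        (-1) ^ card (D - B) * (\<Prod>x\<in>V. c x ^ (outdeg B x + indeg (D - B) x))"
      using V by (simp add: prod_fst_arcs prod_snd_arcs prod_uminus power_add prod.distrib)
  qed simp
  finally show ?thesis .
qed

lemma sum_completed_exponents:
  assumes V: "finite V" and DV: "D \<subseteq> V \<times> V" and B: "B \<subseteq> D"
    and deg: "\<forall>x\<in>V. outdeg D x \<le> M"
  shows "(\<Sum>x\<in>V. M - outdeg D x + (outdeg B x + indeg (D - B) x)) = card V * M"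
proof -
  have D: "finite D" using finite_subset[OF DV] V by blast
  have "B \<subseteq> V \<times> V" "D - B \<subseteq> V \<times> V" using B DV by auto
  then have "(\<Sum>x\<in>V. outdeg B x + indeg (D - B) x) = card B + card (D - B)"
    using V B D by (simp add: sum.distrib sum_outdeg sum_indeg finite_subset)
  also have "\<dots> = (\<Sum>x\<in>V. outdeg D x)"
    using V DV B D by (simp add: sum_outdeg card_Diff_subset finite_subset card_mono)
  finally have "(\<Sum>x\<in>V. M - outdeg D x + (outdeg B x + indeg (D - B) x)) =
      (\<Sum>x\<in>V. M - outdeg D x + outdeg D x)"
    by (simp add: sum.distrib)
  also have "\<dots> = card V * M" using deg by simp
  finally show ?thesis .
qed

lemma completed_exponent_eq_iff:
  assumes D: "finite D" and B: "B \<subseteq> D" and deg: "outdeg D x \<le> M"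
  shows "M - outdeg D x + (outdeg B x + indeg (D - B) x) = M \<longleftrightarrow> outdeg (D - B) x = indeg (D - B) x"
proof -
  have "outdeg D x = outdeg B x + outdeg (D - B) x"
    using outdeg_Un_disjoint[of B "D - B" x] B D by (simp add: finite_subset Un_absorb1)
  with deg show ?thesis by linarith
qed

lemma sum_colourings_completed_monomial:
  fixes S :: "'a::field set"
  assumes V: "finite V" and DV: "D \<subseteq> V \<times> V" and S: "finite S" "S \<noteq> {}"
    and deg: "\<forall>x\<in>V. outdeg D x < card S" and B: "B \<subseteq> D"
  shows "(\<Sum>c\<in>V \<rightarrow>\<^sub>E S. \<Prod>x\<in>V.
            c x ^ (card S - 1 - outdeg D x + (outdeg B x + indeg (D - B) x)) /
            lagrange_denom S (c x))
      = (if eulerian_sub D (D - B) then 1 else 0)"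
proof -
  define e where "e x = card S - 1 - outdeg D x + (outdeg B x + indeg (D - B) x)" for x
  have D: "finite D" using finite_subset[OF DV] V by blast
  have deg': "\<forall>x\<in>V. outdeg D x \<le> card S - 1" using deg by fastforce
  have "(\<Sum>c\<in>V \<rightarrow>\<^sub>E S. \<Prod>x\<in>V. c x ^ e x / lagrange_denom S (c x)) =
      (\<Prod>x\<in>V. \<Sum>s\<in>S. s ^ e x / lagrange_denom S s)"
    using prod_sum_PiE[OF V S(1), of "\<lambda>x s. s ^ e x / lagrange_denom S s"] by simp
  also have "\<dots> = (if \<forall>x\<in>V. e x = card S - 1 then 1 else 0)"
    using sum_completed_exponents[OF V DV B deg']
    by (intro prod_sum_power_div_lagrange_denom[OF S V]) (simp add: e_def)
  also have "(\<forall>x\<in>V. e x = card S - 1) \<longleftrightarrow> eulerian_sub D (D - B)"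
    using completed_exponent_eq_iff[OF D B] deg' eulerian_sub_iff_balanced_on[OF Diff_subset DV]
    unfolding e_def by blast
  finally show ?thesis by (simp add: e_def)
qed

text \<open>The graph polynomial \<open>\<Prod>(x, y)\<in>D. c x - c y\<close> vanishes at every \<open>S\<close>-colouring \<open>c\<close>.
  Summed over all colourings against the weight \<open>w\<close>, the monomial coming from the arcs
  \<open>B\<close> that contribute their tail survives exactly when \<open>D - B\<close> is Eulerian.\<close>
lemma signed_eulerian_sum_eq_0:
  fixes S :: "'a::field set" and D :: "('v \<times> 'v) set"
  assumes V: "finite V" and DV: "D \<subseteq> V \<times> V" and S: "finite S"
    and deg: "\<forall>x\<in>V. outdeg D x < card S"
    and no_colouring: "\<forall>c. (\<forall>x\<in>V. c x \<in> S) \<longrightarrow> (\<exists>(x, y)\<in>D. c x = c y)"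
  shows "(\<Sum>F | eulerian_sub D F. (-1 :: 'a) ^ card F) = 0"
proof -
  have D: "finite D" using finite_subset[OF DV] V by blast
  have S_ne: "S \<noteq> {}"
  proof
    assume "S = {}"
    with deg DV have "D = {}" by fastforce
    with no_colouring \<open>S = {}\<close> deg show False by fastforce
  qed
  define e where "e B x = card S - 1 - outdeg D x + (outdeg B x + indeg (D - B) x)" for B x
  define w where "w c = (\<Prod>x\<in>V. c x ^ (card S - 1 - outdeg D x) / lagrange_denom S (c x))"
    for c :: "'v \<Rightarrow> 'a"
  have expand: "w c * (\<Prod>p\<in>D. c (fst p) - c (snd p)) =
      (\<Sum>B\<in>Pow D. (-1) ^ card (D - B) * (\<Prod>x\<in>V. c x ^ e B x / lagrange_denom S (c x)))" for c
    unfolding prod_arc_differences[OF V DV] sum_distrib_left w_def e_def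
    by (intro sum.cong) (auto simp: prod.distrib[symmetric] power_add)
  have "0 = (\<Sum>c\<in>V \<rightarrow>\<^sub>E S. w c * (\<Prod>p\<in>D. c (fst p) - c (snd p)))"
    using no_colouring D by (force intro!: sum.neutral[symmetric] prod_zero)
  also have "\<dots> = (\<Sum>B\<in>Pow D. (-1) ^ card (D - B) *
      (\<Sum>c\<in>V \<rightarrow>\<^sub>E S. \<Prod>x\<in>V. c x ^ e B x / lagrange_denom S (c x)))"
    unfolding expand sum_distrib_left by (rule sum.swap)
  also have "\<dots> = (\<Sum>B\<in>Pow D. if eulerian_sub D (D - B) then (-1) ^ card (D - B) else 0)"
    unfolding e_def
    using sum_colourings_completed_monomial[OF V DV S S_ne deg] by (intro sum.cong) auto
  also have "\<dots> = (\<Sum>F\<in>Pow D. if eulerian_sub D F then (-1) ^ card F else 0)"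
    by (rule sum.reindex_bij_witness[of _ "\<lambda>F. D - F" "\<lambda>F. D - F"]) auto
  also have "\<dots> = (\<Sum>F\<in>{F \<in> Pow D. eulerian_sub D F}. (-1) ^ card F)"
    using D by (intro sum.inter_filter[symmetric]) simp
  also have "{F \<in> Pow D. eulerian_sub D F} = {F. eulerian_sub D F}"
    by (auto simp: eulerian_sub_def)
  finally show ?thesis by simp
qed

theorem Alon_Tarsi:
  assumes V: "finite V" and DV: "D \<subseteq> V \<times> V" and deg: "\<forall>x\<in>V. outdeg D x < k"
    and "EE D \<noteq> EO D"
  shows "\<exists>c. (\<forall>x\<in>V. c x < k) \<and> (\<forall>(x, y)\<in>D. c x \<noteq> c y)"
proof (rule ccontr)
  assume no_colouring: "\<not> ?thesis"
  have "(\<Sum>F | eulerian_sub D F. (-1 :: real) ^ card F) = 0"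
  proof (rule signed_eulerian_sum_eq_0[OF V DV, of "real ` {..<k}"])
    show "\<forall>x\<in>V. outdeg D x < card (real ` {..<k})"
      using deg by (simp add: card_image)
    show "\<forall>c. (\<forall>x\<in>V. c x \<in> real ` {..<k}) \<longrightarrow> (\<exists>(x, y)\<in>D. c x = c y)"
    proof (intro allI impI)
      fix c :: "'a \<Rightarrow> real"
      assume "\<forall>x\<in>V. c x \<in> real ` {..<k}"
      moreover define col where "col x = nat \<lfloor>c x\<rfloor>" for x
      ultimately have col: "\<forall>x\<in>V. col x < k \<and> c x = real (col x)" by auto
      then obtain x y where "(x, y) \<in> D" "col x = col y"
        using no_colouring by fastforce
      moreover from \<open>(x, y) \<in> D\<close> DV have "x \<in> V" "y \<in> V" by auto
      ultimately show "\<exists>(x, y)\<in>D. c x = c y" using col by (intro bexI[of _ "(x, y)"]) auto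
    qed
  qed simp
  moreover have "finite D" using finite_subset[OF DV] V by blast
  ultimately show False using EE_minus_EO[of D, where 'a = real] \<open>EE D \<noteq> EO D\<close> by simp
qed

lemma orientation_subset_vertices:
  assumes "is_orientation E D" "\<forall>e\<in>E. e \<subseteq> V"
  shows "D \<subseteq> V \<times> V"
proof safe
  fix x y assume "(x, y) \<in> D"
  moreover have "\<forall>(x, y)\<in>D. x \<noteq> y \<and> {x, y} \<in> E"
    using assms(1) unfolding is_orientation_def by (rule conjunct1)
  ultimately have "{x, y} \<in> E" by blast
  with assms(2) show "x \<in> V" "y \<in> V" by auto
qed

lemma orientation_arc_of_edge:
  assumes "is_orientation E D" "{x, y} \<in> E"
  shows "(x, y) \<in> D \<or> (y, x) \<in> D"
proof -
  have "\<forall>e\<in>E. \<exists>!p. p \<in> D \<and> e = {fst p, snd p}"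
    using assms(1) unfolding is_orientation_def by (rule conjunct2)
  with assms(2) have "\<exists>p\<in>D. {x, y} = {fst p, snd p}" by (meson ex1_implies_ex)
  then obtain a b where "(a, b) \<in> D" "{x, y} = {a, b}" by auto
  then show ?thesis by (auto simp: doubleton_eq_iff)
qed

lemma is_orientationI:
  assumes arcs: "\<forall>(x, y)\<in>D. x \<noteq> y \<and> {x, y} \<in> E" and antisym: "\<forall>(x, y)\<in>D. (y, x) \<notin> D"
    and covers: "\<forall>e\<in>E. \<exists>(x, y)\<in>D. e = {x, y}"
  shows "is_orientation E D"
  unfolding is_orientation_def
proof (rule conjI[OF arcs], rule ballI)
  fix e assume "e \<in> E"
  with covers obtain x y where xy: "(x, y) \<in> D" "e = {x, y}" by blast
  show "\<exists>!p. p \<in> D \<and> e = {fst p, snd p}"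
  proof (rule ex1I[of _ "(x, y)"])
    fix q assume q: "q \<in> D \<and> e = {fst q, snd q}"
    obtain a b where "q = (a, b)" by fastforce
    with q xy antisym show "q = (x, y)" by (auto simp: doubleton_eq_iff)
  qed (use xy in simp)
qed

lemma EE_eq_EO_if_clique:
  assumes V: "finite V" and D: "is_orientation E D" and E: "\<forall>e\<in>E. e \<subseteq> V"
    and K: "K \<subseteq> V" "\<forall>x\<in>K. \<forall>y\<in>K. x \<noteq> y \<longrightarrow> {x, y} \<in> E"
    and deg: "\<forall>x\<in>V. outdeg D x < k" and k: "k < card K"
  shows "EE D = EO D"
proof (rule ccontr)
  assume "EE D \<noteq> EO D"
  with Alon_Tarsi[OF V orientation_subset_vertices[OF D E] deg]
  obtain c where c: "\<forall>x\<in>V. c x < k" "\<forall>(x, y)\<in>D. c x \<noteq> c y" by blast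
  have "inj_on c K"
  proof (rule inj_onI, rule ccontr)
    fix x y assume "x \<in> K" "y \<in> K" "c x = c y" "x \<noteq> y"
    with K c(2) orientation_arc_of_edge[OF D] show False by fastforce
  qed
  then have "card K \<le> card {..<k}"
    using c(1) K(1) by (intro card_inj_on_le) auto
  with k show False by simp
qed

section \<open>The graph \<open>G\<^sub>n\<close> and an orientation with \<open>EE \<noteq> EO\<close>\<close>

definition Gn_pair :: "nat \<Rightarrow> nat \<Rightarrow> nat \<Rightarrow> bool" where
  "Gn_pair m x y \<longleftrightarrow> (x < m \<and> y < m) \<or> (m \<le> x \<and> x < 2*m \<and> m \<le> y \<and> y < 2*m) \<or>
     (x < 2*m \<and> (y = 2*m \<or> y = 2*m+1))"

lemma Gn_edges_eq: "Gn_edges (2*m+2) = {{x, y} | x y. x \<noteq> y \<and> Gn_pair m x y}"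
  by (simp add: Gn_edges_def Gn_pair_def)

lemma Gn_edges_subset: "e \<in> Gn_edges (2*m+2) \<Longrightarrow> e \<subseteq> {0..<2*m+2}"
  unfolding Gn_edges_eq Gn_pair_def by auto

lemma Gn_clique:
  assumes "x \<in> insert (2*m) {..<m}" "y \<in> insert (2*m) {..<m}" "x \<noteq> y"
  shows "{x, y} \<in> Gn_edges (2*m+2)"
proof -
  have "Gn_pair m x y \<or> Gn_pair m y x" using assms by (auto simp: Gn_pair_def)
  then show ?thesis unfolding Gn_edges_eq using assms(3) by (auto simp: insert_commute)
qed

definition arcs_Q1 :: "nat \<Rightarrow> (nat \<times> nat) set" where
  "arcs_Q1 m = {(i, j). (i < j \<and> j < m) \<or> (i = 2*m \<and> j < m) \<or> (i < m \<and> j = 2*m+1)}"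

definition arcs_Q2 :: "nat \<Rightarrow> (nat \<times> nat) set" where
  "arcs_Q2 m = {(i, j). (m \<le> i \<and> i < j \<and> j < 2*m) \<or> (i = 2*m+1 \<and> m \<le> j \<and> j < 2*m) \<or>
     (m \<le> i \<and> i < 2*m \<and> j = 2*m)}"

definition Gn_orientation :: "nat \<Rightarrow> (nat \<times> nat) set" where
  "Gn_orientation m = arcs_Q1 m \<union> arcs_Q2 m"

lemma finite_arcs_Q1: "finite (arcs_Q1 m)"
  by (rule finite_subset[of _ "{..2*m+1} \<times> {..2*m+1}"]) (auto simp: arcs_Q1_def)

lemma finite_arcs_Q2: "finite (arcs_Q2 m)"
  by (rule finite_subset[of _ "{..2*m+1} \<times> {..2*m+1}"]) (auto simp: arcs_Q2_def)

lemma arcs_Q1_Q2_disjoint: "arcs_Q1 m \<inter> arcs_Q2 m = {}"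
  by (auto simp: arcs_Q1_def arcs_Q2_def)

lemma is_orientation_Gn_orientation: "is_orientation (Gn_edges (2*m+2)) (Gn_orientation m)"
proof (rule is_orientationI)
  have "x \<noteq> y \<and> {x, y} \<in> Gn_edges (2*m+2)" if "(x, y) \<in> Gn_orientation m" for x y
  proof
    show "x \<noteq> y" using that unfolding Gn_orientation_def arcs_Q1_def arcs_Q2_def by auto
    moreover have "Gn_pair m x y \<or> Gn_pair m y x"
      using that unfolding Gn_orientation_def arcs_Q1_def arcs_Q2_def Gn_pair_def by auto
    ultimately show "{x, y} \<in> Gn_edges (2*m+2)"
      unfolding Gn_edges_eq by (auto simp: insert_commute)
  qed
  then show "\<forall>(x, y)\<in>Gn_orientation m. x \<noteq> y \<and> {x, y} \<in> Gn_edges (2*m+2)" by blast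
  have "(y, x) \<notin> Gn_orientation m" if "(x, y) \<in> Gn_orientation m" for x y
    using that unfolding Gn_orientation_def arcs_Q1_def arcs_Q2_def by simp presburger
  then show "\<forall>(x, y)\<in>Gn_orientation m. (y, x) \<notin> Gn_orientation m" by blast
  show "\<forall>e\<in>Gn_edges (2*m+2). \<exists>(x, y)\<in>Gn_orientation m. e = {x, y}"
  proof
    fix e assume "e \<in> Gn_edges (2*m+2)"
    then obtain x y where "e = {x, y}" "x \<noteq> y" "Gn_pair m x y" unfolding Gn_edges_eq by blast
    have "(x, y) \<in> Gn_orientation m \<or> (y, x) \<in> Gn_orientation m"
      using \<open>x \<noteq> y\<close> \<open>Gn_pair m x y\<close>
      unfolding Gn_orientation_def arcs_Q1_def arcs_Q2_def Gn_pair_def by simp presburger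
    with \<open>e = {x, y}\<close> show "\<exists>(x, y)\<in>Gn_orientation m. e = {x, y}" by (auto simp: insert_commute)
  qed
qed

lemma outdeg_Gn_orientation: "outdeg (Gn_orientation m) x \<le> m"
proof -
  let ?N = "{y. (x, y) \<in> Gn_orientation m}"
  have card_le: "card ?N \<le> m" if "?N \<subseteq> A" "card A \<le> m" "finite A" for A
    using that card_mono[of A ?N] by linarith
  consider "x < m" | "m \<le> x" "x < 2*m" | "x = 2*m" | "x = 2*m+1" | "x > 2*m+1" by linarith
  then have "card ?N \<le> m"
  proof cases
    case 1
    then have "?N \<subseteq> insert (2*m+1) {x<..<m}"
      by (auto simp: Gn_orientation_def arcs_Q1_def arcs_Q2_def)
    with 1 show ?thesis by (intro card_le) (auto simp: card_insert_if)
  next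
    case 2
    then have "?N \<subseteq> insert (2*m) {x<..<2*m}"
      by (auto simp: Gn_orientation_def arcs_Q1_def arcs_Q2_def)
    with 2 show ?thesis by (intro card_le) (auto simp: card_insert_if)
  next
    case 3
    then have "?N \<subseteq> {..<m}" by (auto simp: Gn_orientation_def arcs_Q1_def arcs_Q2_def)
    then show ?thesis by (intro card_le) auto
  next
    case 4
    then have "?N \<subseteq> {m..<2*m}" by (auto simp: Gn_orientation_def arcs_Q1_def arcs_Q2_def)
    then show ?thesis by (intro card_le) auto
  next
    case 5
    then have "?N = {}" by (auto simp: Gn_orientation_def arcs_Q1_def arcs_Q2_def)
    then show ?thesis by simp
  qed
  then show ?thesis by (simp add: outdeg_def)
qed

definition mirror :: "nat \<Rightarrow> nat \<Rightarrow> nat" where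
  "mirror m x = (if x < m then x + m else if x < 2*m then x - m
     else if x = 2*m then 2*m+1 else if x = 2*m+1 then 2*m else x)"

definition mirror_arcs :: "nat \<Rightarrow> (nat \<times> nat) set \<Rightarrow> (nat \<times> nat) set" where
  "mirror_arcs m F = map_prod (mirror m) (mirror m) ` F"

lemma mirror_mirror [simp]: "mirror m (mirror m x) = x"
  unfolding mirror_def by (simp split: if_splits; linarith)

lemma inj_mirror: "inj (mirror m)"
  by (metis injI mirror_mirror)

lemma image_mirror: "mirror m ` A = {y. mirror m y \<in> A}"
  by (auto simp: image_iff) (metis mirror_mirror)

lemma mirror_arcs_mirror_arcs [simp]: "mirror_arcs m (mirror_arcs m F) = F"
  by (force simp: mirror_arcs_def image_image map_prod.comp comp_def)

lemma mem_mirror_arcs: "(x, y) \<in> mirror_arcs m F \<longleftrightarrow> (mirror m x, mirror m y) \<in> F"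
proof
  assume "(x, y) \<in> mirror_arcs m F"
  then obtain a b where "(a, b) \<in> F" "x = mirror m a" "y = mirror m b"
    by (auto simp: mirror_arcs_def)
  then show "(mirror m x, mirror m y) \<in> F" by simp
next
  assume "(mirror m x, mirror m y) \<in> F"
  then have "map_prod (mirror m) (mirror m) (mirror m x, mirror m y) \<in> mirror_arcs m F"
    unfolding mirror_arcs_def by (rule imageI)
  then show "(x, y) \<in> mirror_arcs m F" by simp
qed

lemma card_mirror_arcs: "card (mirror_arcs m F) = card F"
  unfolding mirror_arcs_def
  by (rule card_image) (auto intro: inj_onI simp: inj_eq[OF inj_mirror])

lemma outdeg_mirror_arcs: "outdeg (mirror_arcs m F) x = outdeg F (mirror m x)"
proof -
  have "{y. (x, y) \<in> mirror_arcs m F} = mirror m ` {y. (mirror m x, y) \<in> F}"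
    by (simp add: image_mirror mem_mirror_arcs)
  then show ?thesis
    unfolding outdeg_def by (simp add: card_image inj_on_subset[OF inj_mirror])
qed

lemma indeg_mirror_arcs: "indeg (mirror_arcs m F) x = indeg F (mirror m x)"
proof -
  have "{y. (y, x) \<in> mirror_arcs m F} = mirror m ` {y. (y, mirror m x) \<in> F}"
    by (simp add: image_mirror mem_mirror_arcs)
  then show ?thesis
    unfolding indeg_def by (simp add: card_image inj_on_subset[OF inj_mirror])
qed

lemma mirror_arcs_Q1: "mirror_arcs m (arcs_Q1 m) = arcs_Q2 m"
proof
  show "mirror_arcs m (arcs_Q1 m) \<subseteq> arcs_Q2 m"
    unfolding mirror_arcs_def arcs_Q1_def arcs_Q2_def mirror_def by auto
  have "mirror_arcs m (arcs_Q2 m) \<subseteq> arcs_Q1 m"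
    unfolding mirror_arcs_def arcs_Q1_def arcs_Q2_def mirror_def by auto
  then have "mirror_arcs m (mirror_arcs m (arcs_Q2 m)) \<subseteq> mirror_arcs m (arcs_Q1 m)"
    unfolding mirror_arcs_def by (rule image_mono)
  then show "arcs_Q2 m \<subseteq> mirror_arcs m (arcs_Q1 m)" by simp
qed

lemma mirror_arcs_subset_Q2: "F \<subseteq> arcs_Q1 m \<Longrightarrow> mirror_arcs m F \<subseteq> arcs_Q2 m"
  unfolding mirror_arcs_Q1[symmetric] mirror_arcs_def by (rule image_mono)

lemma mirror_arcs_subset_Q1: "F \<subseteq> arcs_Q2 m \<Longrightarrow> mirror_arcs m F \<subseteq> arcs_Q1 m"
proof -
  assume "F \<subseteq> arcs_Q2 m"
  then have "mirror_arcs m F \<subseteq> mirror_arcs m (arcs_Q2 m)"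
    unfolding mirror_arcs_def by (rule image_mono)
  then show ?thesis by (simp flip: mirror_arcs_Q1)
qed

definition balanced_Q1 :: "nat \<Rightarrow> (nat \<times> nat) set set" where
  "balanced_Q1 m = {F. F \<subseteq> arcs_Q1 m \<and> (\<forall>x<m. outdeg F x = indeg F x)}"

lemma finite_balanced_Q1: "finite (balanced_Q1 m)"
  by (rule finite_subset[of _ "Pow (arcs_Q1 m)"]) (auto simp: balanced_Q1_def finite_arcs_Q1)

lemma outdeg_arcs_Q1_eq_0: "F \<subseteq> arcs_Q1 m \<Longrightarrow> m \<le> x \<Longrightarrow> x \<noteq> 2*m \<Longrightarrow> outdeg F x = 0"
  by (rule outdeg_eq_0) (auto simp: arcs_Q1_def)

lemma indeg_arcs_Q1_eq_0: "F \<subseteq> arcs_Q1 m \<Longrightarrow> m \<le> x \<Longrightarrow> x \<noteq> 2*m+1 \<Longrightarrow> indeg F x = 0"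
  by (rule indeg_eq_0) (auto simp: arcs_Q1_def)

text \<open>Handshake on \<open>Q\<^sub>1 \<union> {u, v}\<close>: \<open>Q\<^sub>1\<close> is balanced, \<open>u\<close> only sends and \<open>v\<close> only receives.\<close>
lemma balanced_Q1_flow:
  assumes "F \<in> balanced_Q1 m"
  shows "outdeg F (2*m) = indeg F (2*m+1)"
proof -
  define V where "V = insert (2*m) (insert (2*m+1) {..<m})"
  have F: "F \<subseteq> arcs_Q1 m" and bal: "\<forall>x<m. outdeg F x = indeg F x"
    using assms by (auto simp: balanced_Q1_def)
  have "finite F" using F finite_arcs_Q1 by (rule finite_subset)
  moreover have "F \<subseteq> V \<times> V" using F by (auto simp: V_def arcs_Q1_def)
  moreover have "finite V" by (simp add: V_def)
  ultimately have "(\<Sum>x\<in>V. outdeg F x) = (\<Sum>x\<in>V. indeg F x)"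
    by (simp add: sum_outdeg sum_indeg)
  moreover have "(\<Sum>x<m. outdeg F x) = (\<Sum>x<m. indeg F x)" using bal by simp
  moreover have "outdeg F (2*m+1) = 0" "indeg F (2*m) = 0"
    using F by (auto intro: outdeg_arcs_Q1_eq_0 indeg_arcs_Q1_eq_0)
  ultimately show ?thesis by (simp add: V_def)
qed

lemma balanced_increasing_arcs_empty:
  fixes F :: "('a::linorder \<times> 'a) set"
  assumes F: "finite F" and incr: "\<forall>(i, j)\<in>F. i < j" and bal: "\<forall>x. outdeg F x = indeg F x"
  shows "F = {}"
proof (rule ccontr)
  assume "F \<noteq> {}"
  define i where "i = Min (fst ` F)"
  have "i \<in> fst ` F" unfolding i_def using F \<open>F \<noteq> {}\<close> by (intro Min_in) auto
  then obtain j where "(i, j) \<in> F" by force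
  then have "outdeg F i > 0"
    using finite_out_neighbours[OF F, of i] by (auto simp: outdeg_def card_gt_0_iff)
  moreover have "(h, i) \<notin> F" for h
  proof
    assume "(h, i) \<in> F"
    then have "i \<le> h" unfolding i_def using F by (intro Min_le) force+
    with \<open>(h, i) \<in> F\<close> incr show False by fastforce
  qed
  then have "indeg F i = 0" by (rule indeg_eq_0)
  ultimately show False using bal by simp
qed

text \<open>Without flow through \<open>u\<close> only the transitive tournament on \<open>Q\<^sub>1\<close> remains,
  and it has no nonempty balanced subgraph.\<close>
lemma balanced_Q1_without_flow:
  assumes "F \<in> balanced_Q1 m" and no_flow: "outdeg F (2*m) = 0"
  shows "F = {}"
proof (rule balanced_increasing_arcs_empty)
  have F: "F \<subseteq> arcs_Q1 m" and bal: "\<forall>x<m. outdeg F x = indeg F x"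
    using assms(1) by (auto simp: balanced_Q1_def)
  show "finite F" using F finite_arcs_Q1 by (rule finite_subset)
  have no_in_v: "indeg F (2*m+1) = 0" using balanced_Q1_flow[OF assms(1)] no_flow by simp
  have "(2*m, j) \<notin> F" "(i, 2*m+1) \<notin> F" for i j
    using no_flow no_in_v finite_out_neighbours[OF \<open>finite F\<close>, of "2*m"]
      finite_in_neighbours[OF \<open>finite F\<close>, of "2*m+1"]
    by (auto simp: outdeg_def indeg_def)
  with F show "\<forall>(i, j)\<in>F. i < j" by (auto simp: arcs_Q1_def)
  show "\<forall>x. outdeg F x = indeg F x"
  proof
    fix x
    consider "x < m" | "x = 2*m" | "x = 2*m+1" | "m \<le> x" "x \<noteq> 2*m" "x \<noteq> 2*m+1" by linarith
    then show "outdeg F x = indeg F x"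
      by cases (use bal no_flow no_in_v outdeg_arcs_Q1_eq_0[OF F] indeg_arcs_Q1_eq_0[OF F] in auto)
  qed
qed

lemma
  assumes "F1 \<subseteq> arcs_Q1 m" "F2 \<subseteq> arcs_Q1 m"
  shows outdeg_Un_mirror_arcs:
      "outdeg (F1 \<union> mirror_arcs m F2) x = outdeg F1 x + outdeg F2 (mirror m x)"
    and indeg_Un_mirror_arcs:
      "indeg (F1 \<union> mirror_arcs m F2) x = indeg F1 x + indeg F2 (mirror m x)"
proof -
  have "finite F1" "finite (mirror_arcs m F2)" "F1 \<inter> mirror_arcs m F2 = {}"
    using assms mirror_arcs_subset_Q2[OF assms(2)] arcs_Q1_Q2_disjoint[of m]
      finite_arcs_Q1 finite_arcs_Q2
    by (auto intro: finite_subset)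
  then show "outdeg (F1 \<union> mirror_arcs m F2) x = outdeg F1 x + outdeg F2 (mirror m x)"
    "indeg (F1 \<union> mirror_arcs m F2) x = indeg F1 x + indeg F2 (mirror m x)"
    by (simp_all add: outdeg_Un_disjoint indeg_Un_disjoint outdeg_mirror_arcs indeg_mirror_arcs)
qed

lemma balanced_Un_mirror_arcs_iff:
  assumes F1: "F1 \<subseteq> arcs_Q1 m" and F2: "F2 \<subseteq> arcs_Q1 m"
  shows "(\<forall>x. outdeg F1 x + outdeg F2 (mirror m x) = indeg F1 x + indeg F2 (mirror m x)) \<longleftrightarrow>
    F1 \<in> balanced_Q1 m \<and> F2 \<in> balanced_Q1 m \<and> outdeg F1 (2*m) = outdeg F2 (2*m)"
    (is "(\<forall>x. ?bal x) \<longleftrightarrow> _")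
proof
  assume bal: "\<forall>x. ?bal x"
  have "outdeg F1 x = indeg F1 x" if "x < m" for x
    using bal[rule_format, of x] that outdeg_arcs_Q1_eq_0[OF F2] indeg_arcs_Q1_eq_0[OF F2]
    by (simp add: mirror_def)
  then have B1: "F1 \<in> balanced_Q1 m" using F1 by (simp add: balanced_Q1_def)
  have "outdeg F2 x = indeg F2 x" if "x < m" for x
    using bal[rule_format, of "x + m"] that outdeg_arcs_Q1_eq_0[OF F1] indeg_arcs_Q1_eq_0[OF F1]
    by (simp add: mirror_def)
  then have B2: "F2 \<in> balanced_Q1 m" using F2 by (simp add: balanced_Q1_def)
  have "outdeg F1 (2*m) = indeg F2 (2*m+1)"
    using bal[rule_format, of "2*m"] outdeg_arcs_Q1_eq_0[OF F2] indeg_arcs_Q1_eq_0[OF F1]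
    by (simp add: mirror_def)
  with B1 B2 show "F1 \<in> balanced_Q1 m \<and> F2 \<in> balanced_Q1 m \<and> outdeg F1 (2*m) = outdeg F2 (2*m)"
    by (simp add: balanced_Q1_flow)
next
  assume "F1 \<in> balanced_Q1 m \<and> F2 \<in> balanced_Q1 m \<and> outdeg F1 (2*m) = outdeg F2 (2*m)"
  then have B1: "F1 \<in> balanced_Q1 m" and B2: "F2 \<in> balanced_Q1 m"
    and flow: "outdeg F1 (2*m) = outdeg F2 (2*m)" by auto
  note zero = outdeg_arcs_Q1_eq_0[OF F1] indeg_arcs_Q1_eq_0[OF F1]
    outdeg_arcs_Q1_eq_0[OF F2] indeg_arcs_Q1_eq_0[OF F2]
  show "\<forall>x. ?bal x"
  proof
    fix x
    consider "x < m" | "m \<le> x" "x < 2*m" | "x = 2*m" | "x = 2*m+1" | "x > 2*m+1" by linarith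
    then show "?bal x"
    proof cases
      case 1
      with B1 zero show ?thesis by (simp add: mirror_def balanced_Q1_def)
    next
      case 2
      with B2 zero show ?thesis by (simp add: mirror_def balanced_Q1_def)
    next
      case 3
      with flow zero balanced_Q1_flow[OF B2] show ?thesis by (simp add: mirror_def)
    next
      case 4
      with flow zero balanced_Q1_flow[OF B1] show ?thesis by (simp add: mirror_def)
    next
      case 5
      with zero show ?thesis by (simp add: mirror_def)
    qed
  qed
qed

lemma eulerian_Un_mirror_arcs_iff:
  assumes F1: "F1 \<subseteq> arcs_Q1 m" and F2: "F2 \<subseteq> arcs_Q1 m"
  shows "eulerian_sub (Gn_orientation m) (F1 \<union> mirror_arcs m F2) \<longleftrightarrow>
    F1 \<in> balanced_Q1 m \<and> F2 \<in> balanced_Q1 m \<and> outdeg F1 (2*m) = outdeg F2 (2*m)"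
proof -
  have "F1 \<union> mirror_arcs m F2 \<subseteq> Gn_orientation m"
    using F1 mirror_arcs_subset_Q2[OF F2] by (auto simp: Gn_orientation_def)
  then show ?thesis
    unfolding balanced_Un_mirror_arcs_iff[OF F1 F2, symmetric]
    by (simp add: eulerian_sub_def outdeg_Un_mirror_arcs[OF F1 F2] indeg_Un_mirror_arcs[OF F1 F2])
qed

lemma sum_pairs_same_key:
  fixes f :: "'a \<Rightarrow> 'b::comm_semiring_1"
  assumes A: "finite A"
  shows "(\<Sum>(a, b)\<in>{(a, b) \<in> A \<times> A. h a = h b}. f a * f b) =
    (\<Sum>k\<in>h ` A. (\<Sum>a | a \<in> A \<and> h a = k. f a) ^ 2)"
proof -
  define g where "g k = (\<Sum>a | a \<in> A \<and> h a = k. f a)" for k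
  have "{(a, b) \<in> A \<times> A. h a = h b} = Sigma A (\<lambda>a. {b \<in> A. h b = h a})" by auto
  then have "(\<Sum>(a, b)\<in>{(a, b) \<in> A \<times> A. h a = h b}. f a * f b) =
      (\<Sum>a\<in>A. \<Sum>b | b \<in> A \<and> h b = h a. f a * f b)"
    using A by (simp add: sum.Sigma)
  also have "\<dots> = (\<Sum>a\<in>A. f a * g (h a))"
    by (simp add: sum_distrib_left g_def)
  also have "\<dots> = (\<Sum>k\<in>h ` A. \<Sum>a | a \<in> A \<and> h a = k. f a * g k)"
    using A by (subst sum.group[symmetric, of A "h ` A" h]) auto
  also have "\<dots> = (\<Sum>k\<in>h ` A. g k ^ 2)"
    by (simp add: g_def sum_distrib_right power2_eq_square)
  finally show ?thesis by (simp add: g_def)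
qed

definition signed_count :: "nat \<Rightarrow> nat \<Rightarrow> int" where
  "signed_count m k = (\<Sum>F | F \<in> balanced_Q1 m \<and> outdeg F (2*m) = k. (-1) ^ card F)"

lemma signed_count_0: "signed_count m 0 = 1"
proof -
  have "{F. F \<in> balanced_Q1 m \<and> outdeg F (2*m) = 0} = {{}}"
    using balanced_Q1_without_flow by (auto simp: balanced_Q1_def)
  then show ?thesis by (simp add: signed_count_def)
qed

lemma signed_eulerian_sum_Gn_orientation:
  "(\<Sum>F | eulerian_sub (Gn_orientation m) F. (-1 :: int) ^ card F) =
    (\<Sum>k\<in>(\<lambda>F. outdeg F (2*m)) ` balanced_Q1 m. signed_count m k ^ 2)"
proof -
  let ?P = "{(F1, F2) \<in> balanced_Q1 m \<times> balanced_Q1 m. outdeg F1 (2*m) = outdeg F2 (2*m)}"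
  let ?join = "\<lambda>(F1, F2). F1 \<union> mirror_arcs m F2"
  let ?split = "\<lambda>F. (F \<inter> arcs_Q1 m, mirror_arcs m (F \<inter> arcs_Q2 m))"
  have "(\<Sum>F | eulerian_sub (Gn_orientation m) F. (-1 :: int) ^ card F) =
      (\<Sum>(F1, F2)\<in>?P. (-1) ^ card F1 * (-1) ^ card F2)"
  proof (rule sum.reindex_bij_witness[of _ ?join ?split])
    fix F assume "F \<in> {F. eulerian_sub (Gn_orientation m) F}"
    then have eul: "eulerian_sub (Gn_orientation m) F" and F: "F \<subseteq> arcs_Q1 m \<union> arcs_Q2 m"
      by (auto simp: eulerian_sub_def Gn_orientation_def)
    have F_split: "F \<inter> arcs_Q1 m \<union> F \<inter> arcs_Q2 m = F" using F by auto
    have Q2: "mirror_arcs m (F \<inter> arcs_Q2 m) \<subseteq> arcs_Q1 m" by (simp add: mirror_arcs_subset_Q1)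
    show "?join (?split F) = F" using F_split by simp
    show "?split F \<in> ?P"
      using eulerian_Un_mirror_arcs_iff[OF Int_lower2[of F] Q2] eul F_split by simp
    have "card F = card (F \<inter> arcs_Q1 m) + card (F \<inter> arcs_Q2 m)"
      using card_Un_disjoint[of "F \<inter> arcs_Q1 m" "F \<inter> arcs_Q2 m"] arcs_Q1_Q2_disjoint[of m]
        finite_arcs_Q1 finite_arcs_Q2 F_split by auto
    then show "(\<lambda>(F1, F2). (-1) ^ card F1 * (-1) ^ card F2) (?split F) = (-1 :: int) ^ card F"
      by (simp add: card_mirror_arcs power_add)
  next
    fix p assume "p \<in> ?P"
    then obtain F1 F2 where p: "p = (F1, F2)" "F1 \<in> balanced_Q1 m" "F2 \<in> balanced_Q1 m"
      "outdeg F1 (2*m) = outdeg F2 (2*m)" by auto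
    then have F1: "F1 \<subseteq> arcs_Q1 m" and F2: "F2 \<subseteq> arcs_Q1 m" by (auto simp: balanced_Q1_def)
    have "(F1 \<union> mirror_arcs m F2) \<inter> arcs_Q1 m = F1"
      "(F1 \<union> mirror_arcs m F2) \<inter> arcs_Q2 m = mirror_arcs m F2"
      using F1 mirror_arcs_subset_Q2[OF F2] arcs_Q1_Q2_disjoint[of m] by auto
    then show "?split (?join p) = p" using p(1) by simp
    show "?join p \<in> {F. eulerian_sub (Gn_orientation m) F}"
      using p eulerian_Un_mirror_arcs_iff[OF F1 F2] by simp
  qed
  also have "\<dots> = (\<Sum>k\<in>(\<lambda>F. outdeg F (2*m)) ` balanced_Q1 m. signed_count m k ^ 2)"
    unfolding signed_count_def
    by (subst sum_pairs_same_key[OF finite_balanced_Q1, symmetric]) (simp add: case_prod_unfold)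
  finally show ?thesis .
qed

lemma EE_neq_EO_Gn_orientation: "EE (Gn_orientation m) \<noteq> EO (Gn_orientation m)"
proof -
  have "finite (Gn_orientation m)"
    by (simp add: Gn_orientation_def finite_arcs_Q1 finite_arcs_Q2)
  then have "int (EE (Gn_orientation m)) - int (EO (Gn_orientation m)) =
      (\<Sum>k\<in>(\<lambda>F. outdeg F (2*m)) ` balanced_Q1 m. signed_count m k ^ 2)"
    by (simp add: EE_minus_EO signed_eulerian_sum_Gn_orientation)
  also have "\<dots> \<ge> signed_count m 0 ^ 2"
  proof (rule member_le_sum)
    show "0 \<in> (\<lambda>F. outdeg F (2*m)) ` balanced_Q1 m"
      by (rule image_eqI[of _ _ "{}"]) (auto simp: balanced_Q1_def)
  qed (simp_all add: finite_balanced_Q1)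
  finally show ?thesis by (simp add: signed_count_0)
qed

lemma EE_eq_EO_if_outdeg_less_m:
  assumes D: "is_orientation (Gn_edges (2*m+2)) D" and deg: "\<forall>x\<in>{0..<2*m+2}. outdeg D x < m"
  shows "EE D = EO D"
proof (rule EE_eq_EO_if_clique[OF finite_atLeastLessThan D _ _ _ deg])
  show "\<forall>e\<in>Gn_edges (2*m+2). e \<subseteq> {0..<2*m+2}" using Gn_edges_subset by blast
  show "insert (2*m) {..<m} \<subseteq> {0..<2*m+2}" by auto
  show "\<forall>x\<in>insert (2*m) {..<m}. \<forall>y\<in>insert (2*m) {..<m}. x \<noteq> y \<longrightarrow> {x, y} \<in> Gn_edges (2*m+2)"
    using Gn_clique by blast
qed simp

theorem theorem2:
  fixes n :: nat
  assumes "even n" and "n \<ge> 4"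
  shows "AT (Gn_vertices n) (Gn_edges n) = n div 2"
proof -
  define m where "m = (n - 2) div 2"
  have n: "n = 2*m+2" using assms by (auto simp: m_def elim!: evenE)
  show ?thesis unfolding AT_def Gn_vertices_def n
  proof (rule Least_equality)
    show "\<exists>D. is_orientation (Gn_edges (2*m+2)) D \<and>
        (\<forall>x\<in>{0..<2*m+2}. outdeg D x < (2*m+2) div 2) \<and> EE D \<noteq> EO D"
      using is_orientation_Gn_orientation EE_neq_EO_Gn_orientation outdeg_Gn_orientation
      by (intro exI[of _ "Gn_orientation m"]) (auto simp: le_imp_less_Suc)
  next
    fix k
    assume "\<exists>D. is_orientation (Gn_edges (2*m+2)) D \<and>
        (\<forall>x\<in>{0..<2*m+2}. outdeg D x < k) \<and> EE D \<noteq> EO D"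
    then obtain D where D: "is_orientation (Gn_edges (2*m+2)) D"
      "\<forall>x\<in>{0..<2*m+2}. outdeg D x < k" "EE D \<noteq> EO D" by blast
    show "(2*m+2) div 2 \<le> k"
    proof (rule ccontr)
      assume "\<not> ?thesis"
      with D(2) have "\<forall>x\<in>{0..<2*m+2}. outdeg D x < m" by fastforce
      with EE_eq_EO_if_outdeg_less_m[OF D(1)] D(3) show False by blast
    qed
  qed
qed

end
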